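(* Let $\theta,\eta\in[0,\infty)^V$, let $(X(t))_{t\ge0}$ be the solution of $E^{W,\theta,\eta}_V(X)$ driven by the Brownian motion $B$, with hitting times $T$, and let $s\ge0$. Set $$\widetilde W^{(s)}=WK_{s\wedge T}^{-1},\qquad\widetilde\eta^{(s)}=\eta+\widetilde W^{(s)}\big((s\wedge T)\eta\big).$$ Then $(X(t+s))_{t\ge0}$ is (pathwise) the solution of $E^{\widetilde W^{(s)},X(s),\widetilde\eta^{(s)}}_V(X)$ driven by the shifted Brownian motion $(B(s+t)-B(s))_{t\ge0}$; its hitting times are $T-s\wedge T$.
   Context: Let $N\ge1$, $V=\{1,\dots,N\}$, and $W=(W_{i,j})$ a symmetric irreducible matrix with nonnegative entries (diagonal entries may be nonzero). Vectors in $\mathbb R^V$ are identified with diagonal matrices; $K_t=\mathrm{Id}-tW$ for $t\in[0,\infty)^V$; $t\wedge T=(\min(t,T_i))_i$. For a finite set $S$, a symmetric nonnegative matrix $M$ on $S$, and $\vartheta,\kappa\in[0,\infty)^S$, the S.D.E. $E^{M,\vartheta,\kappa}_S(X)$ driven by a standard $|S|$-dimensional Brownian motion $B$ is: $X_i(t)=\vartheta_i+\int_0^t\mathbf 1_{u<T_i}dB_i(u)-\int_0^t\mathbf 1_{u<T_i}((M\psi(u))_i+\kappa_i)du$, $i\in S$, with $T_i=\inf\{t\ge0:X_i(t)=0\}$, $\psi(t)=(\mathrm{Id}-(t\wedge T)M)^{-1}(X(t)+(t\wedge T)\kappa)$; it has a unique pathwise solution for all $t\ge0$. *)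

theory Defs
  imports "HOL-Analysis.Analysis"
begin

text \<open>Index set V is a finite type 'n; vectors are real^'n, matrices real^'n^'n.\<close>

definition dmat :: "real^'n \<Rightarrow> real^'n^'n" where
  "dmat v = (\<chi> i j. if i = j then v $ i else 0)"

definition symmetric_nonneg :: "real^'n^'n \<Rightarrow> bool" where
  "symmetric_nonneg M \<longleftrightarrow> (\<forall>i j. M $ i $ j = M $ j $ i \<and> 0 \<le> M $ i $ j)"

definition irreducible_mat :: "real^'n^'n \<Rightarrow> bool" where
  "irreducible_mat M \<longleftrightarrow>
     (\<forall>i j. i \<noteq> j \<longrightarrow> (i, j) \<in> {(a, b). 0 < M $ a $ b}\<^sup>+)"

text \<open>Hitting time of 0 of coordinate i (Inf of the empty set is \<infinity>).\<close>
definition hit :: "(real \<Rightarrow> real^'n) \<Rightarrow> 'n \<Rightarrow> ereal" where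
  "hit X i = Inf {ereal t | t. 0 \<le> t \<and> X t $ i = 0}"

definition tmin :: "real \<Rightarrow> ('n \<Rightarrow> ereal) \<Rightarrow> real^'n" where
  "tmin t T = (\<chi> i. real_of_ereal (min (ereal t) (T i)))"

definition Kmat :: "real^'n^'n \<Rightarrow> real^'n \<Rightarrow> real^'n^'n" where
  "Kmat M v = mat 1 - dmat v ** M"

definition psi :: "real^'n^'n \<Rightarrow> real^'n \<Rightarrow> (real \<Rightarrow> real^'n) \<Rightarrow> real \<Rightarrow> real^'n" where
  "psi M \<kappa> X t =
     matrix_inv (Kmat M (tmin t (hit X))) *v (X t + dmat (tmin t (hit X)) *v \<kappa>)"

text \<open>X solves E^{M,th0,\<kappa>} driven by the path B (pathwise). The stochastic integral
  of the indicator 1_{u<T_i} against dB_i equals B_i(t\<and>T_i) - B_i(0).\<close>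
definition sde_solution ::
  "real^'n^'n \<Rightarrow> real^'n \<Rightarrow> real^'n \<Rightarrow> (real \<Rightarrow> real^'n) \<Rightarrow> (real \<Rightarrow> real^'n) \<Rightarrow> bool" where
  "sde_solution M th0 \<kappa> B X \<longleftrightarrow>
     symmetric_nonneg M \<and> (\<forall>i. 0 \<le> th0 $ i \<and> 0 \<le> \<kappa> $ i) \<and>
     continuous_on {0..} X \<and>
     (\<forall>t\<ge>0. invertible (Kmat M (tmin t (hit X)))) \<and>
     (\<forall>t\<ge>0. \<forall>i.
        (\<lambda>u. if ereal u < hit X i then (M *v psi M \<kappa> X u) $ i + \<kappa> $ i else 0)
           integrable_on {0..t} \<and>
        X t $ i = th0 $ i + (B (tmin t (hit X) $ i) $ i - B 0 $ i)
          - integral {0..t}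
              (\<lambda>u. if ereal u < hit X i then (M *v psi M \<kappa> X u) $ i + \<kappa> $ i else 0))"

end

theory Submission
  imports Defs
begin

text \<open>Write \<open>D(t) = t \<and> T\<close> and \<open>K\<^sub>d = I - d W\<close>. Coordinates are frozen at \<open>0\<close> after their hitting
  times, so the restarted path \<open>X(s + \<cdot>)\<close> has hitting times \<open>T - s \<and> T\<close> and clock
  \<open>D(s + u) - D(s)\<close>. The factorisation \<open>I - \<delta> W K\<^sub>D\<^sub>(\<^sub>s\<^sub>)\<^sup>-\<^sup>1 = K\<^sub>D\<^sub>(\<^sub>s\<^sub>)\<^sub>+\<^sub>\<delta> K\<^sub>D\<^sub>(\<^sub>s\<^sub>)\<^sup>-\<^sup>1\<close> turns the drift
  \<open>W \<psi> + \<eta>\<close> at time \<open>s + u\<close> into the drift of the equation with data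
  \<open>(W K\<^sub>D\<^sub>(\<^sub>s\<^sub>)\<^sup>-\<^sup>1, \<eta> + W K\<^sub>D\<^sub>(\<^sub>s\<^sub>)\<^sup>-\<^sup>1 D(s) \<eta>)\<close> at time \<open>u\<close>, and shifting the integral gives the restarted
  equation. The new matrix is symmetric because \<open>K\<^sub>d\<^sup>T W = W K\<^sub>d\<close>, and nonnegative because
  nonnegativity of \<open>K\<^sub>D\<^sub>(\<^sub>t\<^sub>)\<^sup>-\<^sup>1\<close> propagates along \<open>t \<in> [0, s]\<close> by the resolvent identity.\<close>

lemma matrix_diff_rdistrib:
  fixes A B :: "'a::ring_1^'n^'m" and C :: "'a^'p^'n"
  shows "(A - B) ** C = A ** C - B ** C"
  by (simp add: matrix_matrix_mult_def vec_eq_iff algebra_simps sum_subtractf)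

lemma matrix_diff_ldistrib:
  fixes A :: "'a::ring_1^'n^'m" and B C :: "'a^'p^'n"
  shows "A ** (B - C) = A ** B - A ** C"
  by (simp add: matrix_matrix_mult_def vec_eq_iff algebra_simps sum_subtractf)

lemma matrix_add_rdistrib:
  fixes A B :: "'a::semiring_1^'n^'m" and C :: "'a^'p^'n"
  shows "(A + B) ** C = A ** C + B ** C"
  by (simp add: matrix_matrix_mult_def vec_eq_iff algebra_simps sum.distrib)

lemma dmat_add: "dmat (a + b) = dmat a + dmat b"
  by (simp add: dmat_def vec_eq_iff)

lemma dmat_diff: "dmat (a - b) = dmat a - dmat b"
  by (simp add: dmat_def vec_eq_iff)

lemma dmat_zero [simp]: "dmat 0 = 0"
  by (simp add: dmat_def vec_eq_iff)

lemma dmat_mult_component: "(dmat d ** A) $ i $ j = d $ i * A $ i $ j"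
  by (simp add: matrix_matrix_mult_def dmat_def if_distrib if_distribR cong: if_cong)

lemma mult_dmat_component: "(A ** dmat d) $ i $ j = A $ i $ j * d $ j"
  by (simp add: matrix_matrix_mult_def dmat_def if_distrib if_distribR cong: if_cong)

lemma dmat_vector_component: "(dmat d *v x) $ i = d $ i * x $ i"
  by (simp add: matrix_vector_mult_def dmat_def if_distrib if_distribR cong: if_cong)

lemma
  fixes A :: "'a::semiring_1^'n^'m"
  assumes "invertible A"
  shows matrix_inv_right: "A ** matrix_inv A = mat 1"
    and matrix_inv_left: "matrix_inv A ** A = mat 1"
proof -
  obtain B where "A ** B = mat 1 \<and> B ** A = mat 1"
    using assms by (auto simp: invertible_def)
  then have "A ** matrix_inv A = mat 1 \<and> matrix_inv A ** A = mat 1"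
    unfolding matrix_inv_def by (rule someI)
  then show "A ** matrix_inv A = mat 1" "matrix_inv A ** A = mat 1" by auto
qed

lemma matrix_inv_unique:
  fixes A B :: "'a::field^'n^'n"
  assumes "A ** B = mat 1"
  shows "matrix_inv A = B"
proof -
  have "invertible A"
    using assms invertible_right_inverse by blast
  then have "matrix_inv A = matrix_inv A ** (A ** B)"
    using assms by simp
  also have "\<dots> = B"
    using matrix_inv_left[OF \<open>invertible A\<close>] by (simp add: matrix_mul_assoc)
  finally show ?thesis .
qed

definition nonneg_mat :: "real^'n^'n \<Rightarrow> bool" where
  "nonneg_mat A \<longleftrightarrow> (\<forall>i j. 0 \<le> A $ i $ j)"

definition entry_norm :: "real^'n^'n \<Rightarrow> real" where
  "entry_norm A = (\<Sum>i\<in>UNIV. \<Sum>j\<in>UNIV. \<bar>A $ i $ j\<bar>)"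

lemma nonneg_mat_add: "nonneg_mat A \<Longrightarrow> nonneg_mat B \<Longrightarrow> nonneg_mat (A + B)"
  by (auto simp: nonneg_mat_def)

lemma nonneg_mat_mult: "nonneg_mat A \<Longrightarrow> nonneg_mat B \<Longrightarrow> nonneg_mat (A ** B)"
  by (auto simp: nonneg_mat_def matrix_matrix_mult_def intro!: sum_nonneg)

lemma nonneg_mat_mat_1: "nonneg_mat (mat 1)"
  by (simp add: nonneg_mat_def mat_def)

lemma entry_norm_nonneg: "0 \<le> entry_norm A"
  by (simp add: entry_norm_def sum_nonneg)

lemma row_sum_le_entry_norm: "(\<Sum>j\<in>UNIV. \<bar>A $ i $ j\<bar>) \<le> entry_norm A"
  unfolding entry_norm_def
  by (rule member_le_sum[where f = "\<lambda>i. \<Sum>j\<in>UNIV. \<bar>A $ i $ j\<bar>"]) (auto intro: sum_nonneg)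

lemma abs_component_le_entry_norm: "\<bar>A $ i $ j\<bar> \<le> entry_norm A"
  using member_le_sum[of j UNIV "\<lambda>j. \<bar>A $ i $ j\<bar>"] row_sum_le_entry_norm[of A i] by simp

lemma entry_norm_diff: "entry_norm (A - B) \<le> entry_norm A + entry_norm B"
  unfolding entry_norm_def by (simp add: sum.distrib[symmetric] sum_mono abs_triangle_ineq4)

lemma entry_norm_mult: "entry_norm (A ** B) \<le> entry_norm A * entry_norm B"
proof -
  have "entry_norm (A ** B) = (\<Sum>i\<in>UNIV. \<Sum>k\<in>UNIV. \<bar>\<Sum>j\<in>UNIV. A $ i $ j * B $ j $ k\<bar>)"
    by (simp add: entry_norm_def matrix_matrix_mult_def)
  also have "\<dots> \<le> (\<Sum>i\<in>UNIV. \<Sum>k\<in>UNIV. \<Sum>j\<in>UNIV. \<bar>A $ i $ j\<bar> * \<bar>B $ j $ k\<bar>)"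
    by (intro sum_mono) (simp add: sum_abs[THEN order.trans] abs_mult)
  also have "\<dots> = (\<Sum>i\<in>UNIV. \<Sum>j\<in>UNIV. \<bar>A $ i $ j\<bar> * (\<Sum>k\<in>UNIV. \<bar>B $ j $ k\<bar>))"
    by (rule sum.cong[OF refl]) (simp only: sum_distrib_left, rule sum.swap)
  also have "\<dots> \<le> (\<Sum>i\<in>UNIV. \<Sum>j\<in>UNIV. \<bar>A $ i $ j\<bar> * entry_norm B)"
    by (intro sum_mono mult_left_mono row_sum_le_entry_norm) auto
  also have "\<dots> = entry_norm A * entry_norm B"
    by (simp add: entry_norm_def sum_distrib_right)
  finally show ?thesis .
qed

lemma entry_norm_dmat_mult:
  assumes "\<And>i. 0 \<le> e $ i \<and> e $ i \<le> h"
  shows "entry_norm (dmat e ** A) \<le> h * entry_norm A"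
proof -
  have "entry_norm (dmat e ** A) = (\<Sum>i\<in>UNIV. \<Sum>j\<in>UNIV. \<bar>e $ i\<bar> * \<bar>A $ i $ j\<bar>)"
    by (simp add: entry_norm_def dmat_mult_component abs_mult)
  also have "\<dots> \<le> (\<Sum>i\<in>UNIV. \<Sum>j\<in>UNIV. h * \<bar>A $ i $ j\<bar>)"
    using assms by (intro sum_mono mult_right_mono) auto
  also have "\<dots> = h * entry_norm A"
    by (simp add: entry_norm_def sum_distrib_left)
  finally show ?thesis .
qed

lemma nonneg_fixpoint_unfold:
  assumes N: "nonneg_mat N" and Q: "nonneg_mat Q" and M: "M = N + Q ** M"
  shows "\<exists>S R. nonneg_mat S \<and> nonneg_mat R \<and> M = S + R ** M \<and> entry_norm R \<le> entry_norm Q ^ Suc k"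
proof (induction k)
  case 0
  show ?case
    by (intro exI[of _ N] exI[of _ Q] conjI) (simp_all add: N Q flip: M)
next
  case (Suc k)
  then obtain S R where S: "nonneg_mat S" and R: "nonneg_mat R" and SR: "M = S + R ** M"
    and norm_R: "entry_norm R \<le> entry_norm Q ^ Suc k"
    by blast
  show ?case
  proof (intro exI conjI)
    have "M = S + R ** (N + Q ** M)"
      by (subst M[symmetric]) (fact SR)
    also have "\<dots> = (S + R ** N) + (R ** Q) ** M"
      by (simp add: matrix_add_ldistrib matrix_mul_assoc add.assoc)
    finally show "M = (S + R ** N) + (R ** Q) ** M" .
    show "entry_norm (R ** Q) \<le> entry_norm Q ^ Suc (Suc k)"
      using entry_norm_mult[of R Q] mult_right_mono[OF norm_R entry_norm_nonneg[of Q]]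
      by (simp add: mult.commute)
    show "nonneg_mat (S + R ** N)" "nonneg_mat (R ** Q)"
      using S R N Q by (simp_all add: nonneg_mat_add nonneg_mat_mult)
  qed
qed

text \<open>Iterating \<open>M = N + Q M\<close> writes \<open>M\<close> as a nonnegative matrix plus a remainder \<open>R M\<close>
  whose entries are bounded by \<open>\<parallel>Q\<parallel>\<^sup>k \<parallel>M\<parallel>\<close>.\<close>

lemma nonneg_mat_fixpoint:
  assumes N: "nonneg_mat N" and Q: "nonneg_mat Q" and contr: "entry_norm Q < 1"
    and M: "M = N + Q ** M"
  shows "nonneg_mat M"
  unfolding nonneg_mat_def
proof (intro allI)
  fix i j
  define q where "q = entry_norm Q"
  have bound: "- (q ^ Suc k * entry_norm M) \<le> M $ i $ j" for k
  proof -
    obtain S R where SR: "nonneg_mat S" "M = S + R ** M" "entry_norm R \<le> q ^ Suc k"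
      using nonneg_fixpoint_unfold[OF N Q M] unfolding q_def by blast
    have "M $ i $ j = S $ i $ j + (R ** M) $ i $ j"
      using arg_cong[where f = "\<lambda>A. A $ i $ j", OF SR(2)] by simp
    moreover have "\<bar>(R ** M) $ i $ j\<bar> \<le> q ^ Suc k * entry_norm M"
      using abs_component_le_entry_norm[of "R ** M" i j] entry_norm_mult[of R M]
        mult_right_mono[OF SR(3) entry_norm_nonneg[of M]] by linarith
    moreover have "0 \<le> S $ i $ j"
      using SR(1) by (simp add: nonneg_mat_def)
    ultimately show ?thesis
      by linarith
  qed
  have "(\<lambda>k. - (q ^ Suc k * entry_norm M)) \<longlonglongrightarrow> - (0 * entry_norm M)"
    using contr entry_norm_nonneg[of Q] unfolding q_def
    by (intro tendsto_intros LIMSEQ_Suc LIMSEQ_power_zero) auto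
  then show "0 \<le> M $ i $ j"
    using bound by (auto intro: LIMSEQ_le_const2)
qed

lemma resolvent_identity:
  fixes K1 K2 F N1 N2 :: "'a::semiring_1^'n^'n"
  assumes "K1 = K2 + F" "N1 ** K1 = mat 1" "K2 ** N2 = mat 1"
  shows "N2 = N1 + N1 ** F ** N2"
proof -
  have "N2 = N1 ** K1 ** N2"
    using assms(2) by simp
  also have "\<dots> = N1 ** K2 ** N2 + N1 ** F ** N2"
    using assms(1) by (simp add: matrix_add_ldistrib matrix_add_rdistrib)
  also have "N1 ** K2 ** N2 = N1"
    using assms(3) by (simp flip: matrix_mul_assoc)
  finally show ?thesis .
qed

lemma nonneg_inverse_perturb:
  fixes K1 K2 F N1 N2 :: "real^'n^'n"
  assumes "K1 = K2 + F" "N1 ** K1 = mat 1" "K2 ** N2 = mat 1"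
    and "nonneg_mat N1" "nonneg_mat F" "entry_norm N1 * entry_norm F < 1"
  shows "nonneg_mat N2"
proof (rule nonneg_mat_fixpoint)
  show "N2 = N1 + (N1 ** F) ** N2"
    using resolvent_identity[OF assms(1-3)] .
  show "entry_norm (N1 ** F) < 1"
    using entry_norm_mult[of N1 F] assms(6) by linarith
qed (use assms nonneg_mat_mult in auto)

lemma entry_norm_inverse_perturb:
  fixes K1 K2 F N1 N2 :: "real^'n^'n"
  assumes "K1 = K2 + F" "N1 ** K1 = mat 1" "K2 ** N2 = mat 1"
    and small: "entry_norm F * entry_norm N2 \<le> 1/2"
  shows "entry_norm N1 \<le> 2 * entry_norm N2"
proof -
  have "N1 = N2 - N1 ** F ** N2"
    using resolvent_identity[OF assms(1-3)] by (simp add: algebra_simps)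
  then have "entry_norm N1 = entry_norm (N2 - N1 ** F ** N2)"
    by (rule arg_cong)
  then have "entry_norm N1 \<le> entry_norm N2 + entry_norm N1 * entry_norm F * entry_norm N2"
    using entry_norm_diff[of N2 "N1 ** F ** N2"] entry_norm_mult[of "N1 ** F" N2]
      mult_right_mono[OF entry_norm_mult[of N1 F] entry_norm_nonneg[of N2]] by linarith
  also have "\<dots> \<le> entry_norm N2 + entry_norm N1 * (1/2)"
    using mult_left_mono[OF small entry_norm_nonneg[of N1]] by (simp add: mult.assoc)
  finally show ?thesis by simp
qed

text \<open>Continuity induction on \<open>[0, \<infinity>)\<close>; apply the hypothesis at the infimum of the counterexamples.\<close>

lemma nonneg_real_induct:
  fixes P :: "real \<Rightarrow> bool"
  assumes step: "\<And>\<tau>. 0 \<le> \<tau> \<Longrightarrow> (\<And>r. 0 \<le> r \<Longrightarrow> r < \<tau> \<Longrightarrow> P r) \<Longrightarrow>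
      \<exists>h>0. \<forall>r. \<tau> \<le> r \<and> r \<le> \<tau> + h \<longrightarrow> P r"
    and "0 \<le> t"
  shows "P t"
proof (rule ccontr)
  define bad where "bad = {r. 0 \<le> r \<and> \<not> P r}"
  assume "\<not> P t"
  then have ne: "bad \<noteq> {}"
    using \<open>0 \<le> t\<close> unfolding bad_def by blast
  have bdd: "bdd_below bad"
    unfolding bad_def bdd_below_def by auto
  have "0 \<le> Inf bad"
    using ne unfolding bad_def by (intro cInf_greatest) auto
  moreover have "P r" if "0 \<le> r" "r < Inf bad" for r
  proof (rule ccontr)
    assume "\<not> P r"
    then have "Inf bad \<le> r"
      using that(1) bdd unfolding bad_def by (intro cInf_lower) auto
    then show False
      using that(2) by simp
  qed
  ultimately obtain h where h: "h > 0" "\<forall>r. Inf bad \<le> r \<and> r \<le> Inf bad + h \<longrightarrow> P r"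
    using step by blast
  obtain b where b: "b \<in> bad" "b < Inf bad + h"
    using cInf_lessD[OF ne, of "Inf bad + h"] h(1) by auto
  have "Inf bad \<le> b"
    using cInf_lower[OF b(1) bdd] .
  then have "P b"
    using h(2) b(2) by simp
  moreover have "\<not> P b"
    using b(1) unfolding bad_def by simp
  ultimately show False
    by contradiction
qed

lemma small_step_exists:
  fixes w C :: real
  assumes "0 \<le> w" "0 \<le> C"
  obtains h where "0 < h" "\<And>x. 0 \<le> x \<Longrightarrow> x \<le> h \<Longrightarrow> x * w * C \<le> 1/4"
proof
  define h where "h = 1 / (4 * (C + 1) * (w + 1))"
  show "0 < h"
    using assms by (simp add: h_def)
  have "h * w * C = (w * C) / (4 * ((C + 1) * (w + 1)))"
    by (simp add: h_def)
  also have "\<dots> \<le> ((w + 1) * (C + 1)) / (4 * ((C + 1) * (w + 1)))"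
    using assms by (intro divide_right_mono mult_mono) auto
  also have "\<dots> = 1/4"
    using assms by simp
  finally have "h * w * C \<le> 1/4" .
  then show "x * w * C \<le> 1/4" if "0 \<le> x" "x \<le> h" for x
    using mult_right_mono[OF mult_right_mono[OF that(2) assms(1)] assms(2)] by linarith
qed

context
  fixes W :: "real^'n^'n" and d :: "real \<Rightarrow> real^'n"
  assumes W_nonneg: "nonneg_mat W"
    and d_increment: "\<And>a b i. 0 \<le> a \<Longrightarrow> a \<le> b \<Longrightarrow> 0 \<le> d b $ i - d a $ i \<and> d b $ i - d a $ i \<le> b - a"
    and invertible_path: "\<And>t. 0 \<le> t \<Longrightarrow> invertible (mat 1 - dmat (d t) ** W)"
begin

lemma path_increment:
  assumes "0 \<le> a" "a \<le> b"
  shows "mat 1 - dmat (d a) ** W = (mat 1 - dmat (d b) ** W) + dmat (d b - d a) ** W"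
    and "nonneg_mat (dmat (d b - d a) ** W)"
    and "entry_norm (dmat (d b - d a) ** W) \<le> (b - a) * entry_norm W"
proof -
  show "mat 1 - dmat (d a) ** W = (mat 1 - dmat (d b) ** W) + dmat (d b - d a) ** W"
    by (simp add: dmat_diff matrix_diff_rdistrib)
  show "nonneg_mat (dmat (d b - d a) ** W)"
    using d_increment[OF assms] W_nonneg
    by (auto simp: nonneg_mat_def dmat_mult_component intro!: mult_nonneg_nonneg)
  show "entry_norm (dmat (d b - d a) ** W) \<le> (b - a) * entry_norm W"
    using d_increment[OF assms] by (intro entry_norm_dmat_mult) auto
qed

lemma path_inverse_forward:
  defines "N \<equiv> \<lambda>t. matrix_inv (mat 1 - dmat (d t) ** W)"
  assumes ab: "0 \<le> a" "a \<le> b" and "nonneg_mat (N a)"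
    and small: "entry_norm (N a) * ((b - a) * entry_norm W) < 1"
  shows "nonneg_mat (N b)"
proof (rule nonneg_inverse_perturb[OF path_increment(1)[OF ab]])
  show "N a ** (mat 1 - dmat (d a) ** W) = mat 1" "(mat 1 - dmat (d b) ** W) ** N b = mat 1"
    using ab invertible_path by (simp_all add: N_def matrix_inv_left matrix_inv_right)
  show "entry_norm (N a) * entry_norm (dmat (d b - d a) ** W) < 1"
    using mult_left_mono[OF path_increment(3)[OF ab] entry_norm_nonneg[of "N a"]] small by linarith
qed (use assms path_increment(2) in auto)

lemma path_inverse_backward:
  defines "N \<equiv> \<lambda>t. matrix_inv (mat 1 - dmat (d t) ** W)"
  assumes ab: "0 \<le> a" "a \<le> b"
    and small: "(b - a) * entry_norm W * entry_norm (N b) \<le> 1/2"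
  shows "entry_norm (N a) \<le> 2 * entry_norm (N b)"
proof (rule entry_norm_inverse_perturb[OF path_increment(1)[OF ab]])
  show "N a ** (mat 1 - dmat (d a) ** W) = mat 1" "(mat 1 - dmat (d b) ** W) ** N b = mat 1"
    using ab invertible_path by (simp_all add: N_def matrix_inv_left matrix_inv_right)
  show "entry_norm (dmat (d b - d a) ** W) * entry_norm (N b) \<le> 1/2"
    using mult_right_mono[OF path_increment(3)[OF ab] entry_norm_nonneg[of "N b"]] small by linarith
qed

text \<open>Nonnegativity propagates forwards from \<open>\<tau>\<close> over a step whose size only depends on the
  inverse at \<open>\<tau>\<close>; to reach \<open>\<tau>\<close> itself, the entry norm at an earlier time \<open>r\<close> is first bounded
  backwards from \<open>\<tau>\<close>.\<close>

lemma nonneg_mat_inverse_path: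
  assumes d0: "d 0 = 0" and "0 \<le> t"
  shows "nonneg_mat (matrix_inv (mat 1 - dmat (d t) ** W))"
proof (rule nonneg_real_induct[OF _ \<open>0 \<le> t\<close>])
  define N where "N t = matrix_inv (mat 1 - dmat (d t) ** W)" for t
  define w where "w = entry_norm W"
  fix \<tau> :: real
  assume \<tau>: "0 \<le> \<tau>" and below: "\<And>r. 0 \<le> r \<Longrightarrow> r < \<tau> \<Longrightarrow> nonneg_mat (N r)"
  define C where "C = entry_norm (N \<tau>)"
  obtain h where h: "0 < h" and small: "\<And>x. 0 \<le> x \<Longrightarrow> x \<le> h \<Longrightarrow> x * w * C \<le> 1/4"
    using small_step_exists[of w C] by (auto simp: w_def C_def entry_norm_nonneg)
  have at: "nonneg_mat (N \<tau>)"
  proof (cases "\<tau> = 0")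
    case True
    have "N 0 = mat 1"
      using matrix_inv_unique[of "mat 1" "mat 1"] by (simp add: N_def d0)
    then show ?thesis
      using True nonneg_mat_mat_1 by simp
  next
    case False
    define r where "r = \<tau> - min h (\<tau> / 2)"
    have r: "0 \<le> r" "r < \<tau>" "\<tau> - r \<le> h"
      using h \<tau> False by (auto simp: r_def min_def)
    have "(\<tau> - r) * w * C \<le> 1/4"
      using small r by simp
    have "entry_norm (N r) \<le> 2 * C"
      unfolding C_def N_def using r \<open>(\<tau> - r) * w * C \<le> 1/4\<close>
      by (intro path_inverse_backward) (auto simp: w_def C_def N_def)
    then have "entry_norm (N r) * ((\<tau> - r) * w) \<le> 2 * C * ((\<tau> - r) * w)"
      using r by (intro mult_right_mono) (auto simp: w_def entry_norm_nonneg)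
    also have "\<dots> \<le> 1/2"
      using \<open>(\<tau> - r) * w * C \<le> 1/4\<close> by (simp add: algebra_simps)
    finally have "entry_norm (N r) * ((\<tau> - r) * entry_norm W) < 1"
      by (simp add: w_def)
    then show ?thesis
      using path_inverse_forward[of r \<tau>] r below[OF r(1,2)] by (simp add: N_def)
  qed
  have "nonneg_mat (N r)" if "\<tau> \<le> r" "r \<le> \<tau> + h" for r
    using path_inverse_forward[of \<tau> r] \<tau> that at small[of "r - \<tau>"]
    by (simp add: N_def C_def w_def algebra_simps)
  then show "\<exists>h>0. \<forall>r. \<tau> \<le> r \<and> r \<le> \<tau> + h \<longrightarrow> nonneg_mat (N r)"
    using h by blast
qed

end

lemma Kmat_add: "Kmat W (a + b) = Kmat W a - dmat b ** W"
  by (simp add: Kmat_def dmat_add matrix_add_rdistrib)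

lemma transpose_mult_Kmat_inverse:
  fixes W N :: "real^'n^'n"
  assumes sym: "transpose W = W" and inv: "Kmat W d ** N = mat 1"
  shows "transpose (W ** N) = W ** N"
proof -
  define K where "K = Kmat W d"
  have "transpose K = mat 1 - W ** dmat d"
    using arg_cong[where f = "\<lambda>A. A $ _ $ _", OF sym]
    by (auto simp: K_def Kmat_def vec_eq_iff transpose_def mat_def dmat_mult_component
        mult_dmat_component)
  then have commute: "transpose K ** W = W ** K"
    by (simp add: K_def Kmat_def matrix_diff_rdistrib matrix_diff_ldistrib matrix_mul_assoc)
  have "transpose (W ** N) = transpose N ** W ** (K ** N)"
    using inv sym by (simp add: K_def matrix_transpose_mul)
  also have "\<dots> = transpose N ** (transpose K ** W) ** N"
    by (simp add: commute matrix_mul_assoc)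
  also have "\<dots> = transpose (K ** N) ** W ** N"
    by (simp add: matrix_transpose_mul matrix_mul_assoc)
  also have "\<dots> = W ** N"
    using inv by (simp add: K_def)
  finally show ?thesis .
qed

lemma Kmat_mult_inverse:
  assumes "Kmat W d ** N = mat 1"
  shows "Kmat (W ** N) \<delta> = Kmat W (d + \<delta>) ** N"
proof -
  have "Kmat W (d + \<delta>) ** N = Kmat W d ** N - dmat \<delta> ** W ** N"
    by (simp add: Kmat_add matrix_diff_rdistrib)
  then show ?thesis
    using assms by (simp add: Kmat_def matrix_mul_assoc)
qed

lemma matrix_inv_Kmat_mult_inverse:
  assumes "invertible (Kmat W d)" "invertible (Kmat W (d + \<delta>))"
  shows "matrix_inv (Kmat (W ** matrix_inv (Kmat W d)) \<delta>) = Kmat W d ** matrix_inv (Kmat W (d + \<delta>))"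
proof (rule matrix_inv_unique)
  have "Kmat (W ** matrix_inv (Kmat W d)) \<delta> = Kmat W (d + \<delta>) ** matrix_inv (Kmat W d)"
    using Kmat_mult_inverse[OF matrix_inv_right[OF assms(1)]] .
  then show "Kmat (W ** matrix_inv (Kmat W d)) \<delta> ** (Kmat W d ** matrix_inv (Kmat W (d + \<delta>))) = mat 1"
    using matrix_inv_left[OF assms(1)] matrix_inv_right[OF assms(2)]
    by (metis matrix_mul_assoc matrix_mul_lid)
qed

lemma invertible_Kmat_mult_inverse:
  assumes "invertible (Kmat W d)" "invertible (Kmat W (d + \<delta>))"
  shows "invertible (Kmat (W ** matrix_inv (Kmat W d)) \<delta>)"
  using Kmat_mult_inverse[OF matrix_inv_right[OF assms(1)]] invertible_mult[OF assms(2)]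
    invertible_right_inverse matrix_inv_left[OF assms(1)] by metis

text \<open>Both sides are the drift vector \<open>M \<psi> + \<kappa>\<close> of \<open>psi\<close>: on the right for the data \<open>(W, \<eta>)\<close> at
  clock \<open>d + \<delta>\<close>, on the left for the restarted data at clock \<open>\<delta>\<close>.\<close>

lemma drift_vector_mult_inverse:
  fixes W :: "real^'n^'n" and d \<delta> \<eta> x :: "real^'n"
  assumes inv0: "invertible (Kmat W d)" and inv: "invertible (Kmat W (d + \<delta>))"
  defines "N0 \<equiv> matrix_inv (Kmat W d)" and "N \<equiv> matrix_inv (Kmat W (d + \<delta>))"
  defines "\<eta>' \<equiv> \<eta> + (W ** N0) *v (dmat d *v \<eta>)"
  shows "(W ** N0) *v (matrix_inv (Kmat (W ** N0) \<delta>) *v (x + dmat \<delta> *v \<eta>')) + \<eta>'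
    = W *v (N *v (x + dmat (d + \<delta>) *v \<eta>)) + \<eta>"
proof -
  have K0N0: "Kmat W d ** N0 = mat 1" and N0K0: "N0 ** Kmat W d = mat 1"
    using inv0 by (simp_all add: N0_def matrix_inv_right matrix_inv_left)
  have NK: "N ** Kmat W (d + \<delta>) = mat 1"
    using inv by (simp add: N_def matrix_inv_left)
  have WN: "W ** N0 ** (Kmat W d ** N) = W ** N"
    using N0K0 by (metis matrix_mul_assoc matrix_mul_lid)
  have "N ** dmat \<delta> ** W ** N0 + N0 = N ** (dmat \<delta> ** W + Kmat W (d + \<delta>)) ** N0"
    using NK by (simp add: matrix_add_ldistrib matrix_add_rdistrib matrix_mul_assoc)
  also have "\<dots> = N"
    using K0N0 by (simp add: Kmat_add matrix_mul_assoc[symmetric])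
  finally have resolvent: "N ** dmat \<delta> ** W ** N0 + N0 = N" .
  have key: "(W ** N) *v (dmat \<delta> *v ((W ** N0) *v v)) + (W ** N0) *v v = (W ** N) *v v" for v
    using arg_cong[where f = "\<lambda>A. (W ** A) *v v", OF resolvent]
    by (simp add: matrix_add_ldistrib matrix_vector_mult_add_rdistrib matrix_vector_mul_assoc
        matrix_mul_assoc)
  have "matrix_inv (Kmat (W ** N0) \<delta>) = Kmat W d ** N"
    using matrix_inv_Kmat_mult_inverse[OF inv0 inv] by (simp add: N0_def N_def)
  then have "(W ** N0) *v (matrix_inv (Kmat (W ** N0) \<delta>) *v v) = (W ** N) *v v" for v
    by (simp only: matrix_vector_mul_assoc WN)
  then have "(W ** N0) *v (matrix_inv (Kmat (W ** N0) \<delta>) *v (x + dmat \<delta> *v \<eta>')) + \<eta>'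
      = (W ** N) *v x + (W ** N) *v (dmat \<delta> *v \<eta>)
        + ((W ** N) *v (dmat \<delta> *v ((W ** N0) *v (dmat d *v \<eta>))) + (W ** N0) *v (dmat d *v \<eta>)) + \<eta>"
    by (simp add: \<eta>'_def matrix_vector_right_distrib algebra_simps)
  also have "\<dots> = (W ** N) *v x + (W ** N) *v (dmat \<delta> *v \<eta>) + (W ** N) *v (dmat d *v \<eta>) + \<eta>"
    by (simp only: key)
  also have "\<dots> = W *v (N *v (x + dmat (d + \<delta>) *v \<eta>)) + \<eta>"
    by (simp add: dmat_add matrix_vector_mult_add_rdistrib matrix_vector_right_distrib
        matrix_vector_mul_assoc matrix_mul_assoc algebra_simps)
  finally show ?thesis .
qed

definition min_time :: "real \<Rightarrow> ereal \<Rightarrow> real" where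
  "min_time t x = real_of_ereal (min (ereal t) x)"

lemma tmin_component: "tmin t T $ i = min_time t (T i)"
  by (simp add: tmin_def min_time_def)

lemma min_time_zero: "0 \<le> x \<Longrightarrow> min_time 0 x = 0"
  by (cases x) (auto simp: min_time_def min_def)

lemma min_time_nonneg: "0 \<le> x \<Longrightarrow> 0 \<le> t \<Longrightarrow> 0 \<le> min_time t x"
  by (cases x) (auto simp: min_time_def min_def)

lemma min_time_increment:
  "0 \<le> x \<Longrightarrow> 0 \<le> a \<Longrightarrow> a \<le> b \<Longrightarrow> 0 \<le> min_time b x - min_time a x \<and> min_time b x - min_time a x \<le> b - a"
  by (cases x) (auto simp: min_time_def min_def)

lemma min_time_shift:
  "0 \<le> x \<Longrightarrow> 0 \<le> s \<Longrightarrow> 0 \<le> u \<Longrightarrow> min_time u (x - min (ereal s) x) = min_time (u + s) x - min_time s x"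
  by (cases x) (auto simp: min_time_def min_def)

lemma min_time_stopped_or_running:
  "0 \<le> x \<Longrightarrow> 0 \<le> s \<Longrightarrow> 0 \<le> t \<Longrightarrow> min_time s x = s \<or> min_time (t + s) x = min_time s x"
  by (cases x) (auto simp: min_time_def min_def)

lemma less_shift_iff:
  "0 \<le> x \<Longrightarrow> 0 \<le> s \<Longrightarrow> 0 \<le> u \<Longrightarrow> ereal u < x - min (ereal s) x \<longleftrightarrow> ereal (u + s) < x"
  by (cases x) (auto simp: min_def)

lemma hit_nonneg: "0 \<le> hit X i"
  unfolding hit_def by (rule Inf_greatest) auto

lemma hit_le: "0 \<le> t \<Longrightarrow> X t $ i = 0 \<Longrightarrow> hit X i \<le> ereal t"
  unfolding hit_def by (rule Inf_lower) auto

lemma hit_greatest: "(\<And>t. 0 \<le> t \<Longrightarrow> X t $ i = 0 \<Longrightarrow> c \<le> ereal t) \<Longrightarrow> c \<le> hit X i"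
  unfolding hit_def by (rule Inf_greatest) auto

lemma hit_attained:
  assumes cont: "continuous_on {0..} X" and fin: "hit X i \<noteq> \<infinity>"
  obtains r where "hit X i = ereal r" "0 \<le> r" "X r $ i = 0"
proof -
  define Z where "Z = {t \<in> {0..}. X t $ i = 0}"
  have "closed Z"
    unfolding Z_def
    by (rule continuous_closed_preimage_constant) (auto intro: continuous_on_component cont)
  moreover have "Z \<noteq> {}"
  proof
    assume "Z = {}"
    then have "{ereal t | t. 0 \<le> t \<and> X t $ i = 0} = {}"
      by (auto simp: Z_def)
    then have "hit X i = Inf {}"
      unfolding hit_def by (rule arg_cong)
    then show False
      using fin by (simp add: top_ereal_def)
  qed
  moreover have bdd: "bdd_below Z"
    by (auto simp: Z_def bdd_below_def)
  ultimately have Inf_Z: "Inf Z \<in> Z"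
    by (rule closed_contains_Inf[rotated 2])
  have "hit X i = ereal (Inf Z)"
  proof (rule antisym)
    show "hit X i \<le> ereal (Inf Z)"
      using Inf_Z by (intro hit_le) (auto simp: Z_def)
    show "ereal (Inf Z) \<le> hit X i"
      by (rule hit_greatest) (use bdd in \<open>auto simp: Z_def intro!: cInf_lower\<close>)
  qed
  then show ?thesis
    using Inf_Z that by (auto simp: Z_def)
qed

lemma hit_shift_before_hit:
  assumes cont: "continuous_on {0..} X" and s: "0 \<le> s" "ereal s < hit X i"
  shows "hit (\<lambda>t. X (t + s)) i = hit X i - ereal s"
proof (rule antisym)
  show "hit (\<lambda>t. X (t + s)) i \<le> hit X i - ereal s"
  proof (cases "hit X i = \<infinity>")
    case False
    then obtain r where r: "hit X i = ereal r" "0 \<le> r" "X r $ i = 0"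
      by (rule hit_attained[OF cont])
    then have "hit (\<lambda>t. X (t + s)) i \<le> ereal (r - s)"
      using s by (intro hit_le) auto
    then show ?thesis
      using r by simp
  qed simp
  show "hit X i - ereal s \<le> hit (\<lambda>t. X (t + s)) i"
  proof (rule hit_greatest)
    fix t
    assume "0 \<le> t" "X (t + s) $ i = 0"
    then have "hit X i \<le> ereal (t + s)"
      using s by (intro hit_le) auto
    then show "hit X i - ereal s \<le> ereal t"
      by (cases "hit X i") auto
  qed
qed

lemma hit_shift:
  assumes cont: "continuous_on {0..} X"
    and absorbed: "\<And>r t. hit X i = ereal r \<Longrightarrow> r \<le> t \<Longrightarrow> X t $ i = 0"
    and s: "0 \<le> s"
  shows "hit (\<lambda>t. X (t + s)) i = hit X i - min (ereal s) (hit X i)"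
proof (cases "hit X i \<le> ereal s")
  case True
  then obtain r where r: "hit X i = ereal r" "r \<le> s"
    using hit_nonneg[of X i] by (cases "hit X i") auto
  then have "hit (\<lambda>t. X (t + s)) i \<le> 0"
    using hit_le[of 0 "\<lambda>t. X (t + s)" i] absorbed[of r s] by (simp add: zero_ereal_def)
  then have "hit (\<lambda>t. X (t + s)) i = 0"
    using hit_nonneg[of "\<lambda>t. X (t + s)" i] by simp
  then show ?thesis
    using r by (simp add: min_def)
next
  case False
  then have "min (ereal s) (hit X i) = ereal s"
    by simp
  then show ?thesis
    using hit_shift_before_hit[OF cont s] False by simp
qed

lemma nonneg_until_absorbed:
  assumes cont: "continuous_on {0..} X"
    and absorbed: "\<And>r t. hit X i = ereal r \<Longrightarrow> r \<le> t \<Longrightarrow> X t $ i = 0"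
    and "0 \<le> X 0 $ i" "0 \<le> s"
  shows "0 \<le> X s $ i"
proof (rule ccontr)
  assume neg: "\<not> 0 \<le> X s $ i"
  have "continuous_on {0..s} (\<lambda>t. X t $ i)"
    by (intro continuous_on_component continuous_on_subset[OF cont]) auto
  then obtain u where u: "0 \<le> u" "u \<le> s" "X u $ i = 0"
    using IVT2'[of "\<lambda>t. X t $ i" s 0 0] neg assms(3,4) by auto
  then have "hit X i \<le> ereal u"
    using hit_le by blast
  then obtain r where "hit X i = ereal r" "r \<le> s"
    using hit_nonneg[of X i] u(2) by (cases "hit X i") auto
  then show False
    using absorbed neg by force
qed

definition drift :: "real^'n^'n \<Rightarrow> real^'n \<Rightarrow> (real \<Rightarrow> real^'n) \<Rightarrow> 'n \<Rightarrow> real \<Rightarrow> real" where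
  "drift M \<kappa> X i u = (if ereal u < hit X i then (M *v psi M \<kappa> X u) $ i + \<kappa> $ i else 0)"

lemma sde_solution_iff:
  "sde_solution M th0 \<kappa> B X \<longleftrightarrow>
     symmetric_nonneg M \<and> (\<forall>i. 0 \<le> th0 $ i \<and> 0 \<le> \<kappa> $ i) \<and>
     continuous_on {0..} X \<and>
     (\<forall>t\<ge>0. invertible (Kmat M (tmin t (hit X)))) \<and>
     (\<forall>t\<ge>0. \<forall>i. drift M \<kappa> X i integrable_on {0..t} \<and>
        X t $ i = th0 $ i + (B (tmin t (hit X) $ i) $ i - B 0 $ i) - integral {0..t} (drift M \<kappa> X i))"
  unfolding sde_solution_def drift_def ..

context
  fixes M :: "real^'n^'n" and th0 \<kappa> :: "real^'n" and B X :: "real \<Rightarrow> real^'n"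
  assumes sol: "sde_solution M th0 \<kappa> B X"
begin

lemma sde_solution_continuous: "continuous_on {0..} X"
  using sol by (simp add: sde_solution_iff)

lemma sde_solution_invertible: "0 \<le> t \<Longrightarrow> invertible (Kmat M (tmin t (hit X)))"
  using sol by (simp add: sde_solution_iff)

lemma sde_solution_integrable: "0 \<le> t \<Longrightarrow> drift M \<kappa> X i integrable_on {0..t}"
  using sol by (simp add: sde_solution_iff)

lemma sde_solution_equation:
  "0 \<le> t \<Longrightarrow> X t $ i = th0 $ i + (B (tmin t (hit X) $ i) $ i - B 0 $ i) - integral {0..t} (drift M \<kappa> X i)"
  using sol by (simp add: sde_solution_iff)

lemma sde_solution_absorbed:
  assumes hit: "hit X i = ereal r" and "r \<le> t"
  shows "X t $ i = 0"
proof -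
  have "hit X i \<noteq> \<infinity>"
    using hit by simp
  then obtain r' where "hit X i = ereal r'" "0 \<le> r'" "X r' $ i = 0"
    by (rule hit_attained[OF sde_solution_continuous])
  then have r: "0 \<le> r" "X r $ i = 0"
    using hit by auto
  have "integral {r..t} (drift M \<kappa> X i) = integral {r..t} (\<lambda>u. 0)"
    by (rule integral_cong) (auto simp: drift_def hit)
  moreover have "integral {0..r} (drift M \<kappa> X i) + integral {r..t} (drift M \<kappa> X i)
      = integral {0..t} (drift M \<kappa> X i)"
    using r(1) \<open>r \<le> t\<close> sde_solution_integrable[of t i]
    by (intro Henstock_Kurzweil_Integration.integral_combine) auto
  moreover have "tmin t (hit X) $ i = r" "tmin r (hit X) $ i = r"
    using \<open>r \<le> t\<close> by (auto simp: tmin_component min_time_def hit min_def)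
  ultimately have "X t $ i = X r $ i"
    using sde_solution_equation[of t i] sde_solution_equation[of r i] r(1) \<open>r \<le> t\<close> by simp
  then show ?thesis
    using r(2) by simp
qed

lemma sde_solution_nonneg: "0 \<le> t \<Longrightarrow> 0 \<le> X t $ i"
proof (rule nonneg_until_absorbed[OF sde_solution_continuous sde_solution_absorbed])
  show "0 \<le> X 0 $ i"
    using sde_solution_equation[of 0 i] sol hit_nonneg[of X i]
    by (simp add: tmin_component min_time_zero sde_solution_iff)
qed

end

locale sde_restart =
  fixes W :: "real^'n^'n" and \<theta> \<eta> :: "real^'n" and B X :: "real \<Rightarrow> real^'n" and s :: real
  assumes sol: "sde_solution W \<theta> \<eta> B X" and s_nonneg: "0 \<le> s"
begin

abbreviation "Ts \<equiv> tmin s (hit X)"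
abbreviation "Ws \<equiv> W ** matrix_inv (Kmat W Ts)"
abbreviation "\<eta>s \<equiv> \<eta> + Ws *v (dmat Ts *v \<eta>)"
abbreviation "Xs \<equiv> \<lambda>t. X (t + s)"
abbreviation "Bs \<equiv> \<lambda>t. B (s + t) - B s"

lemma hit_Xs: "hit Xs i = hit X i - min (ereal s) (hit X i)"
  using hit_shift[OF sde_solution_continuous[OF sol] sde_solution_absorbed[OF sol] s_nonneg] .

lemma tmin_Xs:
  assumes "0 \<le> u"
  shows "Ts + tmin u (hit Xs) = tmin (u + s) (hit X)"
  using min_time_shift[OF hit_nonneg[of X] s_nonneg assms] by (simp add: vec_eq_iff tmin_component hit_Xs)

lemma invertible_Kmat_Ts: "invertible (Kmat W Ts)"
  using sde_solution_invertible[OF sol s_nonneg] .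

lemma invertible_Kmat_Ws: "0 \<le> u \<Longrightarrow> invertible (Kmat Ws (tmin u (hit Xs)))"
  using invertible_Kmat_mult_inverse[OF invertible_Kmat_Ts] sde_solution_invertible[OF sol, of "u + s"]
    s_nonneg tmin_Xs by simp

lemma nonneg_mat_inverse_Kmat_Ts: "nonneg_mat (matrix_inv (Kmat W Ts))"
  unfolding Kmat_def
proof (rule nonneg_mat_inverse_path[where d = "\<lambda>t. tmin t (hit X)", OF _ _ _ _ s_nonneg])
  show "nonneg_mat W"
    using sol by (simp add: sde_solution_iff symmetric_nonneg_def nonneg_mat_def)
  show "tmin 0 (hit X) = 0"
    by (simp add: vec_eq_iff tmin_component min_time_zero hit_nonneg)
  show "0 \<le> tmin b (hit X) $ i - tmin a (hit X) $ i \<and> tmin b (hit X) $ i - tmin a (hit X) $ i \<le> b - a"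
    if "0 \<le> a" "a \<le> b" for a b i
    using min_time_increment[OF hit_nonneg that] by (simp add: tmin_component)
  show "invertible (mat 1 - dmat (tmin t (hit X)) ** W)" if "0 \<le> t" for t
    using sde_solution_invertible[OF sol that] by (simp add: Kmat_def)
qed

lemma symmetric_nonneg_Ws: "symmetric_nonneg Ws"
proof -
  have "transpose W = W"
    using sol by (simp add: sde_solution_iff symmetric_nonneg_def vec_eq_iff transpose_def)
  then have "transpose Ws = Ws"
    using matrix_inv_right[OF invertible_Kmat_Ts] by (rule transpose_mult_Kmat_inverse)
  moreover have "nonneg_mat Ws"
    using sol nonneg_mat_inverse_Kmat_Ts
    by (intro nonneg_mat_mult) (simp_all add: sde_solution_iff symmetric_nonneg_def nonneg_mat_def)
  ultimately show ?thesis
    by (auto simp: symmetric_nonneg_def nonneg_mat_def vec_eq_iff transpose_def)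
qed

lemma \<eta>s_nonneg: "0 \<le> \<eta>s $ i"
proof -
  have \<eta>: "0 \<le> \<eta> $ k" for k
    using sol by (simp add: sde_solution_iff)
  moreover have "0 \<le> Ts $ k" for k
    using min_time_nonneg[OF hit_nonneg[of X] s_nonneg] by (simp add: tmin_component)
  moreover have "nonneg_mat Ws"
    using symmetric_nonneg_Ws by (simp add: symmetric_nonneg_def nonneg_mat_def)
  ultimately have "0 \<le> (Ws *v (dmat Ts *v \<eta>)) $ i"
    unfolding matrix_vector_mult_def[of Ws]
    by (auto simp: nonneg_mat_def dmat_vector_component intro!: sum_nonneg)
  then show ?thesis
    using \<eta>[of i] by simp
qed

lemma drift_Xs: "0 \<le> u \<Longrightarrow> drift Ws \<eta>s Xs i u = drift W \<eta> X i (u + s)"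
proof -
  assume u: "0 \<le> u"
  have "Ws *v psi Ws \<eta>s Xs u + \<eta>s = W *v psi W \<eta> X (u + s) + \<eta>"
    using drift_vector_mult_inverse[OF invertible_Kmat_Ts,
        where \<delta> = "tmin u (hit Xs)" and \<eta> = \<eta> and x = "X (u + s)"]
      sde_solution_invertible[OF sol, of "u + s"] u s_nonneg
    by (simp add: psi_def tmin_Xs[OF u])
  then show ?thesis
    using less_shift_iff[OF hit_nonneg s_nonneg u, of X i]
    by (simp add: drift_def hit_Xs vec_eq_iff)
qed

lemma equation_Xs:
  assumes t: "0 \<le> t"
  shows "drift Ws \<eta>s Xs i integrable_on {0..t}"
    and "Xs t $ i = X s $ i + (Bs (tmin t (hit Xs) $ i) $ i - Bs 0 $ i) - integral {0..t} (drift Ws \<eta>s Xs i)"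
proof -
  let ?f = "drift W \<eta> X i"
  have "?f integrable_on {0..t + s}"
    using sde_solution_integrable[OF sol, of "t + s" i] t s_nonneg by simp
  then have "?f integrable_on {s..t + s}"
    by (rule integrable_on_subinterval) (use s_nonneg in auto)
  then have "((\<lambda>u. ?f (u + s)) has_integral integral {s..t + s} ?f) {0..t}"
    using has_integral_shift_real_ivl[OF integrable_integral, of ?f s "t + s" s] by simp
  then have shifted: "(drift Ws \<eta>s Xs i has_integral integral {s..t + s} ?f) {0..t}"
    by (rule has_integral_eq[rotated]) (simp add: drift_Xs)
  then show "drift Ws \<eta>s Xs i integrable_on {0..t}"
    by blast
  have "integral {0..s} ?f + integral {s..t + s} ?f = integral {0..t + s} ?f"
    using sde_solution_integrable[OF sol, of "t + s" i] t s_nonneg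
    by (intro Henstock_Kurzweil_Integration.integral_combine) auto
  moreover have "B (s + tmin t (hit Xs) $ i) $ i - B s $ i
      = B (tmin (t + s) (hit X) $ i) $ i - B (Ts $ i) $ i"
    using min_time_stopped_or_running[OF hit_nonneg s_nonneg t, of X i]
      arg_cong[where f = "\<lambda>v. v $ i", OF tmin_Xs[OF t]]
    by (auto simp: tmin_component)
  ultimately show "Xs t $ i = X s $ i + (Bs (tmin t (hit Xs) $ i) $ i - Bs 0 $ i)
      - integral {0..t} (drift Ws \<eta>s Xs i)"
    using sde_solution_equation[OF sol, of "t + s" i] sde_solution_equation[OF sol, of s i]
      integral_unique[OF shifted] t s_nonneg by simp
qed

theorem sde_solution_Xs: "sde_solution Ws (X s) \<eta>s Bs Xs"
  unfolding sde_solution_iff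
proof (intro conjI allI impI)
  show "continuous_on {0..} Xs"
    by (rule continuous_on_compose2[OF sde_solution_continuous[OF sol]])
      (use s_nonneg in \<open>auto intro!: continuous_intros\<close>)
qed (use symmetric_nonneg_Ws \<eta>s_nonneg sde_solution_nonneg[OF sol s_nonneg] invertible_Kmat_Ws
    equation_Xs in auto)

end

theorem mainTheorem9:
  fixes W :: "real^'n^'n" and \<theta> \<eta> :: "real^'n"
    and B X :: "real \<Rightarrow> real^'n" and s :: real
  assumes "symmetric_nonneg W" and "irreducible_mat W"
    and "\<forall>i. 0 \<le> \<theta> $ i" and "\<forall>i. 0 \<le> \<eta> $ i"
    and "continuous_on UNIV B"
    and "sde_solution W \<theta> \<eta> B X"
    and "0 \<le> s"
  shows "let Ts = tmin s (hit X);
             Wt = W ** matrix_inv (Kmat W Ts);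
             et = \<eta> + Wt *v (dmat Ts *v \<eta>)
         in sde_solution Wt (X s) et (\<lambda>t. B (s + t) - B s) (\<lambda>t. X (t + s))
            \<and> (\<forall>i. hit (\<lambda>t. X (t + s)) i = hit X i - min (ereal s) (hit X i))"
proof -
  interpret sde_restart W \<theta> \<eta> B X s
    using assms(6,7) by unfold_locales
  show ?thesis
    unfolding Let_def using sde_solution_Xs hit_Xs by blast
qed

end
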